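(* Let $H=(V,E)$ be a $3$-uniform hypergraph with at least one edge, without pendant vertices (vertices of degree $1$), whose $2$-intersection graph $\mathcal L_2(H)$ is connected. Then $H$ is eulerian.
   Context: A hypergraph $H=(V,E)$ consists of a finite nonempty vertex set $V$, a finite edge set $E$ disjoint from $V$, and an incidence function assigning to each edge $e\in E$ a subset of $V$ (also denoted $e$); distinct edges may have the same vertex set. $H$ is $3$-uniform if $|e|=3$ for all $e\in E$. The degree of a vertex is the number of edges containing it. A walk is a sequence $W=v_0e_1v_1e_2\cdots e_kv_k$ with $v_i\in V$, $e_i\in E$, such that for each $i$, $v_{i-1}\ne v_i$ and $v_{i-1},v_i\in e_i$. $W$ is closed if $k\ge 2$ and $v_0=v_k$; it is a strict trail if $e_1,\dots,e_k$ are pairwise distinct. An Euler tour of $H$ is a closed strict trail traversing every edge of $H$; $H$ is eulerian if it has one. The $2$-intersection graph $\mathcal L_2(H)$ is the simple graph with vertex set $E$ in which distinct $e,e'$ are adjacent iff $|e\cap e'|=2$. *)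

theory Defs
  imports Main
begin

text \<open>Parallel edges are allowed since edges are abstract elements.\<close>
definition hypergraph :: "'v set \<Rightarrow> 'e set \<Rightarrow> ('e \<Rightarrow> 'v set) \<Rightarrow> bool" where
  "hypergraph V E inc \<longleftrightarrow> finite V \<and> V \<noteq> {} \<and> finite E \<and> (\<forall>e\<in>E. inc e \<subseteq> V)"

definition uniform3 :: "'e set \<Rightarrow> ('e \<Rightarrow> 'v set) \<Rightarrow> bool" where
  "uniform3 E inc \<longleftrightarrow> (\<forall>e\<in>E. card (inc e) = 3)"

definition hdegree :: "'e set \<Rightarrow> ('e \<Rightarrow> 'v set) \<Rightarrow> 'v \<Rightarrow> nat" where
  "hdegree E inc v = card {e\<in>E. v \<in> inc e}"

text \<open>A walk v_0 e_1 v_1 ... e_k v_k is given by the vertex list vs = [v_0,...,v_k]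
  and the edge list es = [e_1,...,e_k].\<close>
definition is_walk :: "'v set \<Rightarrow> 'e set \<Rightarrow> ('e \<Rightarrow> 'v set) \<Rightarrow> 'v list \<Rightarrow> 'e list \<Rightarrow> bool" where
  "is_walk V E inc vs es \<longleftrightarrow> length vs = Suc (length es) \<and> set vs \<subseteq> V \<and> set es \<subseteq> E \<and>
     (\<forall>i < length es. vs ! i \<noteq> vs ! Suc i \<and> vs ! i \<in> inc (es ! i) \<and> vs ! Suc i \<in> inc (es ! i))"

definition is_closed_walk :: "'v set \<Rightarrow> 'e set \<Rightarrow> ('e \<Rightarrow> 'v set) \<Rightarrow> 'v list \<Rightarrow> 'e list \<Rightarrow> bool" where
  "is_closed_walk V E inc vs es \<longleftrightarrow> is_walk V E inc vs es \<and> length es \<ge> 2 \<and> hd vs = last vs"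

definition is_strict_trail :: "'v set \<Rightarrow> 'e set \<Rightarrow> ('e \<Rightarrow> 'v set) \<Rightarrow> 'v list \<Rightarrow> 'e list \<Rightarrow> bool" where
  "is_strict_trail V E inc vs es \<longleftrightarrow> is_walk V E inc vs es \<and> distinct es"

definition is_euler_tour :: "'v set \<Rightarrow> 'e set \<Rightarrow> ('e \<Rightarrow> 'v set) \<Rightarrow> 'v list \<Rightarrow> 'e list \<Rightarrow> bool" where
  "is_euler_tour V E inc vs es \<longleftrightarrow> is_closed_walk V E inc vs es \<and> is_strict_trail V E inc vs es
     \<and> set es = E"

definition eulerian :: "'v set \<Rightarrow> 'e set \<Rightarrow> ('e \<Rightarrow> 'v set) \<Rightarrow> bool" where
  "eulerian V E inc \<longleftrightarrow> (\<exists>vs es. is_euler_tour V E inc vs es)"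

definition L2_adj :: "'e set \<Rightarrow> ('e \<Rightarrow> 'v set) \<Rightarrow> 'e \<Rightarrow> 'e \<Rightarrow> bool" where
  "L2_adj E inc e e' \<longleftrightarrow> e \<in> E \<and> e' \<in> E \<and> e \<noteq> e' \<and> card (inc e \<inter> inc e') = 2"

definition L2_connected :: "'e set \<Rightarrow> ('e \<Rightarrow> 'v set) \<Rightarrow> bool" where
  "L2_connected E inc \<longleftrightarrow> E \<noteq> {} \<and>
     (\<forall>e\<in>E. \<forall>e'\<in>E. (e, e') \<in> {(a, b). L2_adj E inc a b}\<^sup>*)"

end

theory Submission
  imports Defs
begin

text \<open>
  Choose in every edge e two of its three vertices, p e. A closed trail of the multigraph in
  which e joins the two vertices of p e is a closed strict trail of H, so it suffices to find p
  with all degrees even and a closed trail of this multigraph using every edge.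

  Write p e = e - {u e}. All degrees are even iff u leaves out every vertex v an odd number of
  times exactly when deg v is odd. Such a u is built edge by edge, adding each time an edge
  that shares two vertices with an earlier one (possible as L_2(H) is connected): the vertex
  left out of the new edge repairs the parity at its (at most one) new vertex and at one
  exceptional vertex. Since there are no pendant vertices, the exceptional vertex can always be
  kept on an edge that is still to come.

  Now take a longest closed trail over all such p. If it misses an edge, some missed edge f
  shares two vertices with an edge g of the trail. The missed edges still have even degrees, so
  f lies on a closed trail C of missed edges. If C meets the trail, splice the two; otherwise
  exchange the pairs of f and g inside their two common vertices: this keeps all degrees and
  merges the trail with C.
\<close>

definition vertices_of :: "'e set \<Rightarrow> ('e \<Rightarrow> 'v set) \<Rightarrow> 'v set" where
  "vertices_of S inc = \<Union> (inc ` S)"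

lemma vertices_of_insert: "vertices_of (insert e S) inc = inc e \<union> vertices_of S inc"
  by (simp add: vertices_of_def)

lemma uniform3_finite: "uniform3 E inc \<Longrightarrow> e \<in> E \<Longrightarrow> finite (inc e)"
  by (simp add: uniform3_def card_ge_0_finite)

lemma finite_vertices_of:
  "finite S \<Longrightarrow> S \<subseteq> E \<Longrightarrow> uniform3 E inc \<Longrightarrow> finite (vertices_of S inc)"
  unfolding vertices_of_def by (intro finite_Union) (auto intro: uniform3_finite)

lemma rtrancl_leaves_set: "(x, y) \<in> R\<^sup>* \<Longrightarrow> x \<in> S \<Longrightarrow> y \<notin> S \<Longrightarrow> \<exists>a b. (a, b) \<in> R \<and> a \<in> S \<and> b \<notin> S"
  by (induction rule: rtrancl_induct) auto

lemma L2_connected_boundary: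
  assumes "L2_connected E inc" "S \<subseteq> E" "S \<noteq> {}" "S \<noteq> E"
  obtains g f where "g \<in> S" "f \<in> E - S" "card (inc f \<inter> inc g) = 2"
proof -
  obtain g0 f0 where "g0 \<in> S" "f0 \<in> E - S" using assms(2-4) by blast
  with assms(1,2) have "(g0, f0) \<in> {(a, b). L2_adj E inc a b}\<^sup>*"
    unfolding L2_connected_def by blast
  with \<open>g0 \<in> S\<close> \<open>f0 \<in> E - S\<close> obtain g f where "L2_adj E inc g f" "g \<in> S" "f \<notin> S"
    using rtrancl_leaves_set[of g0 f0 _ S] by blast
  then show ?thesis using that by (auto simp: L2_adj_def Int_commute)
qed

section \<open>Even pair selections\<close>

definition pair_selection :: "'e set \<Rightarrow> ('e \<Rightarrow> 'v set) \<Rightarrow> ('e \<Rightarrow> 'v set) \<Rightarrow> bool" where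
  "pair_selection E inc p \<longleftrightarrow> (\<forall>e\<in>E. p e \<subseteq> inc e \<and> card (p e) = 2)"

definition even_degrees :: "'e set \<Rightarrow> ('e \<Rightarrow> 'v set) \<Rightarrow> bool" where
  "even_degrees F p \<longleftrightarrow> (\<forall>v. even (hdegree F p v))"

text \<open>u e is the vertex left out of e.\<close>
definition realizes :: "'e set \<Rightarrow> ('e \<Rightarrow> 'v set) \<Rightarrow> ('e \<Rightarrow> 'v) \<Rightarrow> 'v set \<Rightarrow> bool" where
  "realizes S inc u T \<longleftrightarrow> (\<forall>e\<in>S. u e \<in> inc e) \<and>
     (\<forall>v\<in>vertices_of S inc. odd (card {e \<in> S. u e = v}) \<longleftrightarrow> v \<in> T)"

text \<open>The parity condition is necessary: the numbers of times the vertices are left out add up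
  to card S.\<close>
definition realizable_avoiding :: "'e set \<Rightarrow> ('e \<Rightarrow> 'v set) \<Rightarrow> 'v set \<Rightarrow> bool" where
  "realizable_avoiding S inc Z \<longleftrightarrow> (\<forall>T \<subseteq> vertices_of S inc. even (card T + card S) \<longrightarrow> T \<inter> Z = {} \<longrightarrow>
     (\<exists>u. realizes S inc u T))"

definition toggle :: "'a \<Rightarrow> 'a set \<Rightarrow> 'a set" where
  "toggle h T = (if h \<in> T then T - {h} else insert h T)"

lemma odd_card_toggle:
  assumes "finite T" shows "odd (card (toggle h T) + card T)"
proof (cases "h \<in> T")
  case True
  then have "card T = Suc (card (T - {h}))" using card_Suc_Diff1[OF assms] by simp
  with True show ?thesis by (simp add: toggle_def)
qed (use assms in \<open>simp add: toggle_def\<close>)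

lemma realizes_insert:
  assumes "finite S" "e \<notin> S" "h \<in> inc e" and new: "\<forall>v\<in>inc e - vertices_of S inc. v \<in> T \<longleftrightarrow> v = h"
    and u: "realizes S inc u (toggle h T)"
  shows "realizes (insert e S) inc (u(e := h)) T"
  unfolding realizes_def
proof (intro conjI ballI)
  fix e' assume "e' \<in> insert e S"
  with u \<open>h \<in> inc e\<close> show "(u(e := h)) e' \<in> inc e'" by (auto simp: realizes_def)
next
  fix v assume v: "v \<in> vertices_of (insert e S) inc"
  have "{e' \<in> insert e S. (u(e := h)) e' = v} =
      (if h = v then insert e {e' \<in> S. u e' = v} else {e' \<in> S. u e' = v})"
    using assms(2) by auto
  then have count: "card {e' \<in> insert e S. (u(e := h)) e' = v} =
      (if h = v then Suc (card {e' \<in> S. u e' = v}) else card {e' \<in> S. u e' = v})"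
    using assms(1,2) by simp
  show "odd (card {e' \<in> insert e S. (u(e := h)) e' = v}) \<longleftrightarrow> v \<in> T"
  proof (cases "v \<in> vertices_of S inc")
    case True
    with u show ?thesis unfolding count by (auto simp: realizes_def toggle_def)
  next
    case False
    with u have "{e' \<in> S. u e' = v} = {}" by (auto simp: realizes_def vertices_of_def)
    then have "card {e' \<in> S. u e' = v} = 0" by (simp only: card.empty)
    with False v new show ?thesis unfolding count by (auto simp: vertices_of_insert)
  qed
qed

text \<open>Leaving h out of the new edge e flips the parity at h only.\<close>
lemma realizable_avoiding_insert:
  assumes fin: "finite S" "finite (vertices_of (insert e S) inc)" and "e \<notin> S"
    and R: "realizable_avoiding S inc Z"
    and pick: "\<And>T. T \<subseteq> vertices_of (insert e S) inc \<Longrightarrow> even (card T + card (insert e S)) \<Longrightarrow>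
      T \<inter> Z' = {} \<Longrightarrow> \<exists>h\<in>inc e. \<forall>v\<in>(inc e - vertices_of S inc) \<union> Z. v \<in> T \<longleftrightarrow> v = h"
  shows "realizable_avoiding (insert e S) inc Z'"
  unfolding realizable_avoiding_def
proof (intro allI impI)
  fix T assume T: "T \<subseteq> vertices_of (insert e S) inc" "even (card T + card (insert e S))" "T \<inter> Z' = {}"
  obtain h where h: "h \<in> inc e" "\<forall>v\<in>(inc e - vertices_of S inc) \<union> Z. v \<in> T \<longleftrightarrow> v = h"
    using pick[OF T] by blast
  have "finite T" using T(1) fin(2) by (rule finite_subset)
  have "toggle h T \<subseteq> vertices_of S inc"
  proof
    fix v assume "v \<in> toggle h T"
    then have "v \<in> T \<and> v \<noteq> h \<or> v = h \<and> h \<notin> T" by (auto simp: toggle_def split: if_splits)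
    moreover have "v \<in> inc e \<union> vertices_of S inc" if "v \<in> T"
      using that T(1) by (simp add: vertices_of_insert subset_iff)
    moreover have "v \<in> T \<longleftrightarrow> v = h" if "v \<in> inc e" "v \<notin> vertices_of S inc"
      using h(2) that by blast
    ultimately show "v \<in> vertices_of S inc" using h(1) by blast
  qed
  moreover have "even (card (toggle h T) + card S)"
    using T(2) odd_card_toggle[OF \<open>finite T\<close>, of h] fin(1) \<open>e \<notin> S\<close> by simp
  moreover have "toggle h T \<inter> Z = {}" using h(2) by (auto simp: toggle_def)
  ultimately obtain u where u: "realizes S inc u (toggle h T)"
    using R[unfolded realizable_avoiding_def, rule_format, of "toggle h T"] by blast
  have "realizes (insert e S) inc (u(e := h)) T"
    by (rule realizes_insert) (use fin(1) \<open>e \<notin> S\<close> h u in auto)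
  then show "\<exists>u. realizes (insert e S) inc u T" by blast
qed

lemma exists_element_matching:
  assumes "finite K" "K \<subseteq> A" "A - K \<noteq> {}" "card (T \<inter> K) \<le> 1"
  shows "\<exists>h\<in>A. \<forall>v\<in>K. v \<in> T \<longleftrightarrow> v = h"
proof (cases "T \<inter> K = {}")
  case True
  with assms(3) show ?thesis by blast
next
  case False
  with assms(1,4) have "card (T \<inter> K) = 1" by (simp add: le_Suc_eq card_gt_0_iff)
  then obtain k where "T \<inter> K = {k}" by (rule card_1_singletonE)
  with assms(2) show ?thesis by blast
qed

lemma exists_left_out_vertex:
  assumes e: "card (inc e) = 3" "card (inc e - V) \<le> 1" and Z: "Z \<subseteq> {z}"
    and T: "T \<inter> (if Z \<inter> inc e = {} then Z else inc e - V) = {}"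
  shows "\<exists>h\<in>inc e. \<forall>v\<in>(inc e - V) \<union> Z. v \<in> T \<longleftrightarrow> v = h"
proof -
  define K where "K = (inc e - V) \<union> (Z \<inter> inc e)"
  have "finite (inc e)" using e(1) by (simp add: card_ge_0_finite)
  then have K: "finite K" "K \<subseteq> inc e" by (auto simp: K_def)
  have "card (Z \<inter> inc e) \<le> card {z}" using Z by (intro card_mono) auto
  then have Ze: "card (Z \<inter> inc e) \<le> 1" by simp
  have "card K \<le> 2" using card_Un_le[of "inc e - V" "Z \<inter> inc e"] e(2) Ze by (simp add: K_def)
  then have "inc e - K \<noteq> {}" using e(1) K card_mono[OF \<open>finite K\<close>, of "inc e"] by auto
  moreover have "card (T \<inter> K) \<le> 1"
  proof (cases "Z \<inter> inc e = {}")
    case True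
    then have "card (T \<inter> K) \<le> card (inc e - V)" using K by (intro card_mono) (auto simp: K_def)
    with e(2) show ?thesis by simp
  next
    case False
    with T have "card (T \<inter> K) \<le> card (Z \<inter> inc e)" using K by (intro card_mono) (auto simp: K_def)
    with Ze show ?thesis by simp
  qed
  ultimately obtain h where h: "h \<in> inc e" "\<forall>v\<in>K. v \<in> T \<longleftrightarrow> v = h"
    using exists_element_matching[OF K] by blast
  have "v \<in> T \<longleftrightarrow> v = h" if "v \<in> Z" "v \<notin> inc e" for v
  proof -
    have "Z \<inter> inc e = {}" using that Z by auto
    with T that h(1) show ?thesis by auto
  qed
  with h show ?thesis by (auto simp: K_def)
qed

lemma subset_singleton_if_card_le_1:
  assumes "finite A" "card A \<le> 1" shows "\<exists>z. A \<subseteq> {z}"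
proof (cases "A = {}")
  case False
  then obtain a where "a \<in> A" by blast
  moreover have "\<forall>x\<in>A. \<forall>y\<in>A. x = y" using assms card_le_Suc0_iff_eq by (metis One_nat_def)
  ultimately show ?thesis by blast
qed simp

text \<open>The exceptional vertex in Z still lies on an edge outside S, where its parity can be
  repaired later.\<close>
definition parity_state :: "'e set \<Rightarrow> ('e \<Rightarrow> 'v set) \<Rightarrow> 'e set \<Rightarrow> 'v set \<Rightarrow> bool" where
  "parity_state E inc S Z \<longleftrightarrow> Z \<subseteq> vertices_of S inc \<and> (\<exists>z. Z \<subseteq> {z}) \<and>
     realizable_avoiding S inc Z \<and> (\<forall>z\<in>Z. \<exists>e\<in>E - S. z \<in> inc e)"

lemma parity_state_insert:
  assumes E: "finite E" "uniform3 E inc"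
    and no_pendant: "\<And>e v. e \<in> E \<Longrightarrow> v \<in> inc e \<Longrightarrow> \<exists>e'\<in>E. e' \<noteq> e \<and> v \<in> inc e'"
    and S: "S \<subseteq> E" "parity_state E inc S Z"
    and e: "e \<in> E" "e \<notin> S" "2 \<le> card (inc e \<inter> vertices_of S inc)"
  shows "parity_state E inc (insert e S) (if Z \<inter> inc e = {} then Z else inc e - vertices_of S inc)"
    (is "parity_state E inc _ ?Z'")
proof -
  let ?N = "inc e - vertices_of S inc"
  have "finite S" using E(1) S(1) by (rule finite_subset[rotated])
  have fin: "finite (vertices_of (insert e S) inc)"
    using finite_vertices_of[of "insert e S" E inc] \<open>finite S\<close> S(1) e(1) E(2) by simp
  have "card (inc e) = 3" using E(2) e(1) by (simp add: uniform3_def)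
  moreover have "card ?N = card (inc e) - card (inc e \<inter> vertices_of S inc)"
    using fin by (intro card_Diff_subset_Int) (auto simp: vertices_of_insert)
  ultimately have N: "card ?N \<le> 1" using e(3) by simp
  obtain z where z: "Z \<subseteq> {z}" using S(2) by (auto simp: parity_state_def)
  have "realizable_avoiding S inc Z" using S(2) by (simp add: parity_state_def)
  then have "realizable_avoiding (insert e S) inc ?Z'"
    using exists_left_out_vertex[where inc = inc and e = e, OF \<open>card (inc e) = 3\<close> N z]
    by (intro realizable_avoiding_insert[OF \<open>finite S\<close> fin e(2)]) blast
  moreover have "\<exists>z. ?Z' \<subseteq> {z}"
  proof (cases "Z \<inter> inc e = {}")
    case False
    have "finite ?N" using fin by (auto simp: vertices_of_insert)
    with N False show ?thesis by (simp add: subset_singleton_if_card_le_1)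
  qed (use z in auto)
  moreover have "\<exists>e'\<in>E - insert e S. v \<in> inc e'" if v: "v \<in> ?Z'" for v
  proof (cases "Z \<inter> inc e = {}")
    case True
    with v have "v \<in> Z" "v \<notin> inc e" by auto
    moreover from this(1) S(2) obtain e' where "e' \<in> E - S" "v \<in> inc e'"
      unfolding parity_state_def by blast
    ultimately show ?thesis by blast
  next
    case False
    with v have "v \<in> inc e" "v \<notin> vertices_of S inc" by simp_all
    then obtain e' where "e' \<in> E" "e' \<noteq> e" "v \<in> inc e'" using no_pendant e(1) by blast
    with \<open>v \<notin> vertices_of S inc\<close> show ?thesis by (auto simp: vertices_of_def)
  qed
  moreover have "?Z' \<subseteq> vertices_of (insert e S) inc"
    using S(2) by (auto simp: parity_state_def vertices_of_insert)
  ultimately show ?thesis unfolding parity_state_def by (intro conjI ballI) simp_all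
qed

lemma parity_state_singleton:
  assumes "uniform3 E inc" "e \<in> E"
    and no_pendant: "\<And>e v. e \<in> E \<Longrightarrow> v \<in> inc e \<Longrightarrow> \<exists>e'\<in>E. e' \<noteq> e \<and> v \<in> inc e'"
  shows "\<exists>Z. parity_state E inc {e} Z"
proof -
  have "card (inc e) = 3" using assms(1,2) by (simp add: uniform3_def)
  then have fin: "finite (inc e)" by (simp add: card_ge_0_finite)
  obtain z where z: "z \<in> inc e" using \<open>card (inc e) = 3\<close> by fastforce
  have R: "realizable_avoiding {} inc {}" by (simp add: realizable_avoiding_def realizes_def vertices_of_def)
  have "realizable_avoiding (insert e {}) inc {z}"
  proof (rule realizable_avoiding_insert[OF _ _ _ R])
    fix T assume T: "T \<subseteq> vertices_of (insert e {}) inc" "even (card T + card (insert e {}))"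
      "T \<inter> {z} = {}"
    then have "T \<subseteq> inc e - {z}" by (auto simp: vertices_of_def)
    moreover have "card (inc e - {z}) = 2" using \<open>card (inc e) = 3\<close> z fin by simp
    ultimately have "card T \<le> 2" by (metis card_mono finite_Diff fin)
    moreover have "odd (card T)" using T(2) by simp
    ultimately have "card T = 1" by presburger
    then obtain h where "T = {h}" by (rule card_1_singletonE)
    with T(1) show "\<exists>h\<in>inc e. \<forall>v\<in>(inc e - vertices_of {} inc) \<union> {}. v \<in> T \<longleftrightarrow> v = h"
      by (auto simp: vertices_of_def)
  qed (use fin in \<open>simp_all add: vertices_of_def\<close>)
  moreover obtain e' where "e' \<in> E" "e' \<noteq> e" "z \<in> inc e'" using no_pendant assms(2) z by blast
  ultimately have "parity_state E inc {e} {z}" using z by (auto simp: parity_state_def vertices_of_def)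
  then show ?thesis ..
qed

lemma parity_state_grow:
  assumes E: "finite E" "uniform3 E inc" "L2_connected E inc"
    and no_pendant: "\<And>e v. e \<in> E \<Longrightarrow> v \<in> inc e \<Longrightarrow> \<exists>e'\<in>E. e' \<noteq> e \<and> v \<in> inc e'"
    and S: "S \<subseteq> E" "S \<noteq> {}" "parity_state E inc S Z"
  shows "realizable_avoiding E inc {}"
  using S
proof (induction "card (E - S)" arbitrary: S Z rule: less_induct)
  case less
  show ?case
  proof (cases "S = E")
    case True
    with less.prems(3) have "Z = {}" "realizable_avoiding E inc Z" by (auto simp: parity_state_def)
    then show ?thesis by simp
  next
    case False
    with L2_connected_boundary[OF E(3) less.prems(1,2)]
    obtain g f where gf: "g \<in> S" "f \<in> E - S" "card (inc f \<inter> inc g) = 2" by blast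
    have "inc f \<inter> inc g \<subseteq> inc f \<inter> vertices_of S inc" using gf(1) by (auto simp: vertices_of_def)
    moreover have "finite (inc f)" using uniform3_finite[OF E(2)] gf(2) by blast
    ultimately have "card (inc f \<inter> inc g) \<le> card (inc f \<inter> vertices_of S inc)"
      by (intro card_mono) auto
    with gf(3) have "2 \<le> card (inc f \<inter> vertices_of S inc)" by simp
    with parity_state_insert[OF E(1,2) no_pendant less.prems(1,3)] gf(2)
    have state: "parity_state E inc (insert f S) (if Z \<inter> inc f = {} then Z else inc f - vertices_of S inc)"
      by blast
    have "E - insert f S \<subset> E - S" using gf(2) by blast
    then have "card (E - insert f S) < card (E - S)" using E(1) by (intro psubset_card_mono) auto
    from less.hyps[OF this _ _ state] less.prems(1) gf(2) show ?thesis by blast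
  qed
qed

lemma even_card_odd_degree_vertices:
  assumes "finite E" "uniform3 E inc"
  shows "even (card {v \<in> vertices_of E inc. odd (hdegree E inc v)} + card E)"
proof -
  have fin: "finite (vertices_of E inc)" using finite_vertices_of[OF assms(1) _ assms(2)] by simp
  have "(\<Sum>v\<in>vertices_of E inc. hdegree E inc v) = 3 * card E"
    unfolding hdegree_def
  proof (rule sum_multicount[OF fin assms(1)], intro ballI)
    fix e assume "e \<in> E"
    then have "{v \<in> vertices_of E inc. v \<in> inc e} = inc e" by (auto simp: vertices_of_def)
    with \<open>e \<in> E\<close> assms(2) show "card {v \<in> vertices_of E inc. v \<in> inc e} = 3"
      by (simp add: uniform3_def)
  qed
  then show ?thesis using even_sum_iff[OF fin, of "hdegree E inc"] by simp
qed

lemma exists_even_pair_selection: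
  assumes E: "finite E" "uniform3 E inc" and R: "realizable_avoiding E inc {}"
  shows "\<exists>p. pair_selection E inc p \<and> even_degrees E p"
proof -
  define T where "T = {v \<in> vertices_of E inc. odd (hdegree E inc v)}"
  have "T \<subseteq> vertices_of E inc" "even (card T + card E)"
    using even_card_odd_degree_vertices[OF E] by (auto simp: T_def)
  then obtain u where u: "realizes E inc u T"
    using R[unfolded realizable_avoiding_def, rule_format, of T] by blast
  define p where "p e = inc e - {u e}" for e
  have "pair_selection E inc p"
    using u uniform3_finite[OF E(2)] E(2) by (auto simp: pair_selection_def p_def realizes_def uniform3_def)
  moreover have "even (hdegree E p v)" for v
  proof -
    have picks: "{e \<in> E. u e = v} \<subseteq> {e \<in> E. v \<in> inc e}" using u by (auto simp: realizes_def)
    have "{e \<in> E. v \<in> p e} = {e \<in> E. v \<in> inc e} - {e \<in> E. u e = v}" by (auto simp: p_def)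
    then have "hdegree E p v = hdegree E inc v - card {e \<in> E. u e = v}"
      using picks E(1) by (simp add: hdegree_def card_Diff_subset)
    moreover have "card {e \<in> E. u e = v} \<le> hdegree E inc v"
      using picks E(1) by (simp add: hdegree_def card_mono)
    moreover have "odd (card {e \<in> E. u e = v}) \<longleftrightarrow> odd (hdegree E inc v)"
    proof (cases "v \<in> vertices_of E inc")
      case True
      with u show ?thesis by (simp add: realizes_def T_def)
    next
      case False
      then have "{e \<in> E. v \<in> inc e} = {}" by (auto simp: vertices_of_def)
      moreover from this picks have "{e \<in> E. u e = v} = {}" by blast
      ultimately have "card {e \<in> E. u e = v} = 0" "hdegree E inc v = 0"
        by (simp_all only: hdegree_def card.empty)
      then show ?thesis by simp
    qed
    ultimately show ?thesis by auto
  qed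
  ultimately show ?thesis by (auto simp: even_degrees_def)
qed

section \<open>Closed trails in the multigraph of a pair selection\<close>

fun gwalk :: "('e \<Rightarrow> 'v set) \<Rightarrow> 'v list \<Rightarrow> 'e list \<Rightarrow> bool" where
  "gwalk p [v] [] = True"
| "gwalk p (v # w # vs) (e # es) \<longleftrightarrow> v \<noteq> w \<and> p e = {v, w} \<and> gwalk p (w # vs) es"
| "gwalk p _ _ = False"

lemma gwalk_length: "gwalk p vs es \<Longrightarrow> length vs = Suc (length es)"
  by (induction p vs es rule: gwalk.induct) auto

lemma gwalk_nth:
  "gwalk p vs es \<Longrightarrow> i < length es \<Longrightarrow> vs ! i \<noteq> vs ! Suc i \<and> p (es ! i) = {vs ! i, vs ! Suc i}"
proof (induction p vs es arbitrary: i rule: gwalk.induct)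
  case (2 p v w vs e es)
  then show ?case by (cases i) auto
qed auto

lemma gwalk_append:
  "gwalk p vs es \<Longrightarrow> gwalk p ws ds \<Longrightarrow> last vs = hd ws \<Longrightarrow> gwalk p (vs @ tl ws) (es @ ds)"
proof (induction p vs es rule: gwalk.induct)
  case (1 p v)
  then show ?case by (cases ws) auto
qed auto

lemma gwalk_take_drop:
  "gwalk p vs es \<Longrightarrow> i \<le> length es \<Longrightarrow>
     gwalk p (take (Suc i) vs) (take i es) \<and> gwalk p (drop i vs) (drop i es)"
proof (induction p vs es arbitrary: i rule: gwalk.induct)
  case (2 p v w vs e es)
  show ?case
  proof (cases i)
    case (Suc j)
    with 2 have "gwalk p (take (Suc j) (w # vs)) (take j es) \<and> gwalk p (drop j (w # vs)) (drop j es)"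
      by auto
    with 2 Suc show ?thesis by (cases vs) auto
  qed (use 2 in auto)
qed auto

lemma gwalk_rev: "gwalk p vs es \<Longrightarrow> gwalk p (rev vs) (rev es)"
proof (induction p vs es rule: gwalk.induct)
  case (2 p v w vs e es)
  then have "gwalk p (rev (w # vs)) (rev es)" "gwalk p [w, v] [e]"
    by (auto simp: insert_commute)
  from gwalk_append[OF this] show ?case by simp
qed auto

lemma gwalk_cong: "\<forall>e\<in>set es. p e = q e \<Longrightarrow> gwalk p vs es \<longleftrightarrow> gwalk q vs es"
  by (induction p vs es rule: gwalk.induct) auto

lemma gwalk_edge_subset: "gwalk p vs es \<Longrightarrow> e \<in> set es \<Longrightarrow> p e \<subseteq> set vs"
  by (induction p vs es rule: gwalk.induct) auto

lemma gwalk_edge_doubleton: "gwalk p vs es \<Longrightarrow> e \<in> set es \<Longrightarrow> \<exists>a b. p e = {a, b}"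
  by (induction p vs es rule: gwalk.induct) auto

lemma gwalk_vertices_subset: "gwalk p vs es \<Longrightarrow> es \<noteq> [] \<Longrightarrow> set vs \<subseteq> \<Union> (p ` set es)"
proof (induction p vs es rule: gwalk.induct)
  case (2 p v w vs e es)
  show ?case
  proof (cases "es = []")
    case True
    with 2 have "vs = []" using gwalk_length[of p "w # vs" es] by simp
    with 2 True show ?thesis by simp
  qed (use 2 in auto)
qed auto

lemma card_Collect_insert:
  "finite A \<Longrightarrow> x \<notin> A \<Longrightarrow>
     card {y \<in> insert x A. P y} = (if P x then Suc (card {y \<in> A. P y}) else card {y \<in> A. P y})"
proof -
  assume "finite A" "x \<notin> A"
  have "{y \<in> insert x A. P y} = (if P x then insert x {y \<in> A. P y} else {y \<in> A. P y})" by auto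
  with \<open>finite A\<close> \<open>x \<notin> A\<close> show ?thesis by simp
qed

lemma odd_hdegree_trail:
  "gwalk p vs es \<Longrightarrow> distinct es \<Longrightarrow> odd (hdegree (set es) p z) \<longleftrightarrow> (hd vs = z) \<noteq> (last vs = z)"
proof (induction p vs es rule: gwalk.induct)
  case (2 p v w vs e es)
  have "hdegree (insert e (set es)) p z = (if z \<in> p e then Suc (hdegree (set es) p z) else hdegree (set es) p z)"
    unfolding hdegree_def by (rule card_Collect_insert) (use 2 in auto)
  with 2 show ?case by auto
qed (auto simp: hdegree_def)

definition closed_trail :: "('e \<Rightarrow> 'v set) \<Rightarrow> 'v list \<Rightarrow> 'e list \<Rightarrow> bool" where
  "closed_trail p vs es \<longleftrightarrow> gwalk p vs es \<and> distinct es \<and> es \<noteq> [] \<and> hd vs = last vs"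

lemma closed_trail_length_ge_2:
  assumes "closed_trail p vs es" shows "2 \<le> length es"
proof (rule ccontr)
  assume "\<not> 2 \<le> length es"
  moreover have "length es \<noteq> 0" using assms by (simp add: closed_trail_def)
  ultimately have "length es = 1" by linarith
  moreover have "length vs = Suc (length es)"
    using assms gwalk_length by (auto simp: closed_trail_def)
  ultimately obtain a b where "vs = [a, b]" "vs ! 0 \<noteq> vs ! 1"
    using assms gwalk_nth[of p vs es 0] by (auto simp: closed_trail_def length_Suc_conv)
  with assms show False by (simp add: closed_trail_def)
qed

lemma closed_trail_rotate:
  assumes "closed_trail p vs es" "i < length es"
  shows "\<exists>rv. closed_trail p (vs ! i # vs ! Suc i # rv) (rotate i es)"
proof -
  have gw: "gwalk p vs es" and len: "length vs = Suc (length es)" and closed: "hd vs = last vs"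
    using assms(1) gwalk_length by (auto simp: closed_trail_def)
  define vs' where "vs' = drop i vs @ tl (take (Suc i) vs)"
  have "gwalk p (drop i vs) (drop i es)" "gwalk p (take (Suc i) vs) (take i es)"
    using gwalk_take_drop[OF gw] assms(2) by auto
  moreover have "last (drop i vs) = hd (take (Suc i) vs)"
    using closed len assms(2) by (cases vs) (simp_all add: last_drop)
  ultimately have "gwalk p vs' (drop i es @ take i es)"
    unfolding vs'_def by (rule gwalk_append)
  moreover have "hd vs' = last vs'"
  proof (cases i)
    case 0
    with closed show ?thesis by (cases vs) (simp_all add: vs'_def)
  next
    case (Suc j)
    have "length (tl (take (Suc i) vs)) = i" using len assms(2) by simp
    with Suc have "tl (take (Suc i) vs) \<noteq> []" by (metis list.size(3) nat.distinct(1))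
    moreover have "last (take (Suc i) vs) = vs ! i"
      using len assms(2) by (simp add: take_Suc_conv_app_nth)
    ultimately show ?thesis
      using len assms(2) by (simp add: vs'_def last_tl hd_drop_conv_nth)
  qed
  moreover have "drop i es @ take i es = rotate i es"
    using assms(2) by (simp add: rotate_drop_take)
  ultimately have "closed_trail p vs' (rotate i es)"
    using assms(1) by (simp add: closed_trail_def)
  moreover have "vs' = vs ! i # vs ! Suc i # drop (Suc (Suc i)) vs @ tl (take (Suc i) vs)"
    using len assms(2) by (simp add: vs'_def Cons_nth_drop_Suc)
  ultimately show ?thesis by auto
qed

lemma closed_trail_rotate_to_edge:
  assumes "closed_trail p vs es" "i < length es"
  shows "\<exists>rv re. closed_trail p (vs ! i # vs ! Suc i # rv) (es ! i # re) \<and> set (es ! i # re) = set es"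
proof -
  obtain rv where rv: "closed_trail p (vs ! i # vs ! Suc i # rv) (rotate i es)"
    using closed_trail_rotate[OF assms] by blast
  have "es \<noteq> []" using assms(1) by (simp add: closed_trail_def)
  then have "rotate i es \<noteq> []" "hd (rotate i es) = es ! i"
    using assms(2) by (simp_all add: hd_rotate_conv_nth)
  then have "rotate i es = es ! i # tl (rotate i es)" by (metis list.collapse)
  with rv show ?thesis by (metis set_rotate)
qed

lemma closed_trail_rev: "closed_trail p vs es \<Longrightarrow> closed_trail p (rev vs) (rev es)"
  using gwalk_length[of p vs es] by (auto simp: closed_trail_def gwalk_rev hd_rev last_rev)

lemma closed_trail_through_edge:
  assumes "closed_trail p vs es" "g \<in> set es" "p g = {x, y}"
  shows "\<exists>rv re. closed_trail p (x # y # rv) (g # re) \<and> set (g # re) = set es"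
proof -
  obtain i where i: "i < length es" "es ! i = g" using assms(2) by (meson in_set_conv_nth)
  have len: "length vs = Suc (length es)"
    using assms(1) gwalk_length by (auto simp: closed_trail_def)
  have "p g = {vs ! i, vs ! Suc i}"
    using assms(1) gwalk_nth[OF _ i(1)] i(2) by (auto simp: closed_trail_def)
  with assms(3) consider "vs ! i = x" "vs ! Suc i = y" | "vs ! i = y" "vs ! Suc i = x"
    by (auto simp: doubleton_eq_iff)
  then show ?thesis
  proof cases
    case 1
    with closed_trail_rotate_to_edge[OF assms(1) i(1)] i(2) show ?thesis by auto
  next
    case 2
    define j where "j = length es - Suc i"
    have "length vs - Suc j = Suc i" "length vs - Suc (Suc j) = i" "length es - Suc j = i"
      using i(1) len by (simp_all add: j_def)
    then have j: "j < length (rev es)" "rev vs ! j = x" "rev vs ! Suc j = y" "rev es ! j = g"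
      using i 2 len by (simp_all add: j_def rev_nth)
    from closed_trail_rotate_to_edge[OF closed_trail_rev[OF assms(1)] j(1)] j(2-4)
    show ?thesis by auto
  qed
qed

lemma closed_trail_through_vertex:
  assumes "closed_trail p vs es" "w \<in> set vs"
  shows "\<exists>ws ds. closed_trail p ws ds \<and> hd ws = w \<and> set ds = set es"
proof -
  have "es \<noteq> []" "gwalk p vs es" using assms(1) by (auto simp: closed_trail_def)
  with assms(2) obtain g where g: "g \<in> set es" "w \<in> p g"
    using gwalk_vertices_subset by blast
  moreover obtain y where "p g = {w, y}"
  proof -
    obtain a b where "p g = {a, b}" using gwalk_edge_doubleton[OF \<open>gwalk p vs es\<close> g(1)] by blast
    with g(2) that show ?thesis by (metis empty_iff insert_commute insert_iff)
  qed
  ultimately show ?thesis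
    using closed_trail_through_edge[OF assms(1)] by fastforce
qed

lemma closed_trail_splice:
  assumes "closed_trail p vs es" "closed_trail p ws ds" "set es \<inter> set ds = {}"
    and "w \<in> set vs" "w \<in> set ws"
  shows "\<exists>us cs. closed_trail p us cs \<and> set cs = set es \<union> set ds"
proof -
  obtain vs' es' where T: "closed_trail p vs' es'" "hd vs' = w" "set es' = set es"
    using closed_trail_through_vertex[OF assms(1,4)] by blast
  obtain ws' ds' where C: "closed_trail p ws' ds'" "hd ws' = w" "set ds' = set ds"
    using closed_trail_through_vertex[OF assms(2,5)] by blast
  have "gwalk p (vs' @ tl ws') (es' @ ds')"
    using T C by (intro gwalk_append) (auto simp: closed_trail_def)
  moreover have "tl ws' \<noteq> []"
    using C(1) gwalk_length[of p ws' ds'] by (cases ws') (auto simp: closed_trail_def)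
  moreover have "vs' \<noteq> []"
    using T(1) gwalk_length[of p vs' es'] by (auto simp: closed_trail_def)
  ultimately have "closed_trail p (vs' @ tl ws') (es' @ ds')"
    using T C assms(3) by (auto simp: closed_trail_def last_tl)
  with T(3) C(3) show ?thesis by (intro exI[of _ "vs' @ tl ws'"] exI[of _ "es' @ ds'"]) simp
qed

text \<open>An open end of a trail has odd degree in the trail but even degree in F.\<close>
lemma open_trail_extends:
  assumes F: "finite F" "even_degrees F p" "\<forall>e\<in>F. card (p e) = 2"
    and T: "gwalk p vs es" "distinct es" "set es \<subseteq> F" "hd vs \<noteq> last vs"
  shows "\<exists>e w. e \<in> F - set es \<and> gwalk p (vs @ [w]) (es @ [e])"
proof -
  define z where "z = last vs"
  have "odd (hdegree (set es) p z)"
    using odd_hdegree_trail[OF T(1,2)] T(4) by (simp add: z_def)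
  moreover have "even (hdegree F p z)" using F(2) by (simp add: even_degrees_def)
  moreover have "{e \<in> set es. z \<in> p e} \<subseteq> {e \<in> F. z \<in> p e}" using T(3) by auto
  moreover have "{e \<in> set es. z \<in> p e} \<noteq> {e \<in> F. z \<in> p e}"
    using calculation(1,2) by (metis hdegree_def)
  ultimately obtain e where e: "e \<in> F" "e \<notin> set es" "z \<in> p e" by blast
  obtain w where w: "p e = {z, w}" "z \<noteq> w"
  proof -
    obtain x y where "p e = {x, y}" "x \<noteq> y" using F(3) e(1) by (meson card_2_iff)
    with that e(3) show ?thesis by (auto simp: insert_commute)
  qed
  then have "gwalk p [z, w] [e]" by simp
  from gwalk_append[OF T(1) this] have "gwalk p (vs @ [w]) (es @ [e])" by (simp add: z_def)
  with e show ?thesis by blast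
qed

lemma even_degrees_closed_trail:
  assumes F: "finite F" "even_degrees F p" "\<forall>e\<in>F. card (p e) = 2" and "f \<in> F"
  shows "\<exists>vs es. closed_trail p vs es \<and> set es \<subseteq> F \<and> f \<in> set es"
proof -
  define trail_len where "trail_len n \<longleftrightarrow>
    (\<exists>vs es. gwalk p vs es \<and> distinct es \<and> set es \<subseteq> F \<and> hd es = f \<and> length es = n)" for n
  obtain a b where "p f = {a, b}" "a \<noteq> b" using F(3) \<open>f \<in> F\<close> by (meson card_2_iff)
  then have one: "trail_len 1"
    unfolding trail_len_def using \<open>f \<in> F\<close> by (intro exI[of _ "[a, b]"] exI[of _ "[f]"]) auto
  have bound: "\<forall>n. trail_len n \<longrightarrow> n \<le> card F"
  proof (intro allI impI)
    fix n assume "trail_len n"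
    then obtain es where "distinct es" "set es \<subseteq> F" "length es = n" unfolding trail_len_def by blast
    then have "n = card (set es)" by (simp add: distinct_card)
    with F(1) \<open>set es \<subseteq> F\<close> show "n \<le> card F" by (simp add: card_mono)
  qed
  obtain n where n: "trail_len n" "\<forall>m. trail_len m \<longrightarrow> m \<le> n"
    using Nat.ex_has_greatest_nat[OF one bound] by blast
  then obtain vs es where T: "gwalk p vs es" "distinct es" "set es \<subseteq> F" "hd es = f" "length es = n"
    unfolding trail_len_def by blast
  have "n \<noteq> 0" using n(2) one by force
  with T have "es \<noteq> []" by auto
  have "hd vs = last vs"
  proof (rule ccontr)
    assume "hd vs \<noteq> last vs"
    with open_trail_extends[OF F T(1-3)] obtain e w where
      "e \<in> F - set es" "gwalk p (vs @ [w]) (es @ [e])" by blast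
    with T \<open>es \<noteq> []\<close> have "trail_len (Suc n)"
      unfolding trail_len_def by (intro exI[of _ "vs @ [w]"] exI[of _ "es @ [e]"]) auto
    with n(2) show False by fastforce
  qed
  moreover have "f \<in> set es" using T(4) \<open>es \<noteq> []\<close> by (cases es) auto
  ultimately show ?thesis using T \<open>es \<noteq> []\<close> unfolding closed_trail_def by blast
qed

lemma even_degrees_Diff_closed_trail:
  assumes "finite E" "even_degrees E p" "closed_trail p vs es" "set es \<subseteq> E"
  shows "even_degrees (E - set es) p"
  unfolding even_degrees_def
proof
  fix v
  have "{e \<in> E - set es. v \<in> p e} = {e \<in> E. v \<in> p e} - {e \<in> set es. v \<in> p e}" by auto
  then have "hdegree (E - set es) p v = hdegree E p v - hdegree (set es) p v"
    unfolding hdegree_def using assms(1,4) by (simp add: card_Diff_subset subset_iff)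
  moreover have "even (hdegree (set es) p v)"
    using assms(3) odd_hdegree_trail[of p vs es v] by (auto simp: closed_trail_def)
  moreover have "hdegree (set es) p v \<le> hdegree E p v"
    unfolding hdegree_def using assms(1,4) by (intro card_mono) auto
  ultimately show "even (hdegree (E - set es) p v)"
    using assms(2) by (auto simp: even_degrees_def)
qed

lemma hdegree_exchange:
  assumes "finite E" "f \<in> E" "g \<in> E" "f \<noteq> g" "\<And>e. e \<notin> {f, g} \<Longrightarrow> q e = p e"
    and "p f \<union> p g = q f \<union> q g" "p f \<inter> p g = {}" "q f \<inter> q g = {}"
  shows "hdegree E q v = hdegree E p v"
proof -
  have split: "hdegree E r v = hdegree (E - {f, g}) r v + hdegree {f, g} r v" for r :: "'a \<Rightarrow> 'b set"
  proof -
    have "{e \<in> E. v \<in> r e} = {e \<in> E - {f, g}. v \<in> r e} \<union> {e \<in> {f, g}. v \<in> r e}"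
      using assms(2,3) by auto
    moreover have "card ({e \<in> E - {f, g}. v \<in> r e} \<union> {e \<in> {f, g}. v \<in> r e})
        = card {e \<in> E - {f, g}. v \<in> r e} + card {e \<in> {f, g}. v \<in> r e}"
      using assms(1) by (intro card_Un_disjoint) auto
    ultimately show ?thesis unfolding hdegree_def by simp
  qed
  have pair: "hdegree {f, g} r v = (if v \<in> r f \<union> r g then 1 else 0)" if "r f \<inter> r g = {}"
    for r :: "'a \<Rightarrow> 'b set"
  proof -
    have "{e \<in> {f, g}. v \<in> r e} = (if v \<in> r f then {f} else if v \<in> r g then {g} else {})"
      using that assms(4) by auto
    then show ?thesis by (simp add: hdegree_def)
  qed
  have "hdegree (E - {f, g}) q v = hdegree (E - {f, g}) p v"
    unfolding hdegree_def using assms(5) by (metis DiffD2)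
  then show ?thesis using split[of q] split[of p] pair[of q] pair[of p] assms(6-8) by simp
qed

lemma closed_trail_join:
  assumes T: "closed_trail p (x # b # rv) (g # re)" and C: "closed_trail p (y # a # rw) (f # rd)"
    and disj: "set (g # re) \<inter> set (f # rd) = {}"
    and q: "\<And>e. e \<notin> {f, g} \<Longrightarrow> q e = p e" "q f = {x, a}" "q g = {y, b}" "x \<noteq> a" "y \<noteq> b"
  shows "closed_trail q (x # a # rw @ b # rv) (f # rd @ g # re)"
proof -
  have "gwalk p (b # rv) re" "last (b # rv) = x" "gwalk p (a # rw) rd" "last (a # rw) = y"
    using T C by (auto simp: closed_trail_def)
  moreover have "f \<notin> set re" "g \<notin> set re" "f \<notin> set rd" "g \<notin> set rd"
    using T C disj by (auto simp: closed_trail_def)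
  moreover have "\<forall>e\<in>set re. q e = p e" "\<forall>e\<in>set rd. q e = p e"
    using calculation(5-8) by (intro ballI q(1); blast)+
  ultimately have re: "gwalk q (b # rv) re" and rd: "gwalk q (a # rw) rd"
    using gwalk_cong by blast+
  have "gwalk q [x, a] [f]" "gwalk q [y, b] [g]" using q(2-5) by auto
  from gwalk_append[OF this(1) rd] have "gwalk q (x # a # rw) (f # rd)" by simp
  from gwalk_append[OF this \<open>gwalk q [y, b] [g]\<close>] have "gwalk q (x # a # rw @ [b]) (f # rd @ [g])"
    using \<open>last (a # rw) = y\<close> by (simp add: last_ConsR)
  from gwalk_append[OF this re] have "gwalk q (x # a # rw @ b # rv) (f # rd @ g # re)" by simp
  moreover have "last (x # a # rw @ b # rv) = x" using \<open>last (b # rv) = x\<close> by (simp add: last_ConsR)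
  moreover have "distinct (f # rd @ g # re)" using T C disj by (auto simp: closed_trail_def)
  ultimately show ?thesis by (simp add: closed_trail_def)
qed

lemma Int_nonempty_if_card_gt:
  assumes "finite B" "A \<subseteq> B" "C \<subseteq> B" "card B < card A + card C"
  shows "A \<inter> C \<noteq> {}"
proof
  assume "A \<inter> C = {}"
  then have "card (A \<union> C) = card A + card C"
    using assms(1-3) by (meson card_Un_disjoint finite_subset)
  moreover have "card (A \<union> C) \<le> card B" using assms(1-3) by (simp add: card_mono)
  ultimately show False using assms(4) by simp
qed

lemma card_2_doubleton: "card A = 2 \<Longrightarrow> x \<in> A \<Longrightarrow> \<exists>y. A = {x, y} \<and> x \<noteq> y"
  by (metis card_2_iff doubleton_eq_iff insert_iff singletonD)

text \<open>The exchanged pairs {x, a} of f and {y, b} of g leave all degrees unchanged and each join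
  a vertex of W to one outside W.\<close>
lemma crossing_pairs:
  assumes fg: "card (inc f) = 3" "card (inc g) = 3" "card (inc f \<inter> inc g) = 2"
    and pf: "p f \<subseteq> inc f" "card (p f) = 2" and pg: "p g \<subseteq> inc g" "card (p g) = 2"
    and W: "p g \<subseteq> W" "p f \<inter> W = {}"
  obtains x y a b where "p g = {x, b}" "p f = {y, a}" "x \<in> inc f" "y \<in> inc g" "distinct [x, y, a, b]"
proof -
  define I where "I = inc f \<inter> inc g"
  have fin: "finite (inc f)" "finite (inc g)" using fg by (auto intro: card_ge_0_finite)
  have "p g \<inter> I \<noteq> {}" "p f \<inter> I \<noteq> {}"
    using Int_nonempty_if_card_gt[OF fin(2) pg(1), of I] Int_nonempty_if_card_gt[OF fin(1) pf(1), of I]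
      fg pf pg by (auto simp: I_def)
  then obtain x y where x: "x \<in> p g" "x \<in> I" and y: "y \<in> p f" "y \<in> I" by blast
  have "x \<noteq> y" using x y W by blast
  with x y fg(3) have I: "I = {x, y}"
    by (metis I_def insert_iff singletonD card_2_doubleton)
  obtain b where b: "p g = {x, b}" "x \<noteq> b" using card_2_doubleton[OF pg(2) x(1)] by blast
  obtain a where a: "p f = {y, a}" "y \<noteq> a" using card_2_doubleton[OF pf(2) y(1)] by blast
  have "a \<notin> inc g"
  proof
    assume "a \<in> inc g"
    with a pf(1) I have "a = x" by (auto simp: I_def)
    with a x W show False by blast
  qed
  moreover have "b \<notin> inc f"
  proof
    assume "b \<in> inc f"
    with b pg(1) I have "b = y" by (auto simp: I_def)
    with b y W show False by blast
  qed
  moreover have "x \<in> inc f" "x \<in> inc g" "y \<in> inc f" "y \<in> inc g" using x y by (auto simp: I_def)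
  ultimately have "distinct [x, y, a, b]" using a b pg(1) \<open>x \<noteq> y\<close> by auto
  with a(1) b(1) \<open>x \<in> inc f\<close> \<open>y \<in> inc g\<close> show ?thesis by (intro that)
qed

lemma closed_trail_switch:
  assumes E: "finite E" "uniform3 E inc" and p: "pair_selection E inc p" "even_degrees E p"
    and T: "closed_trail p vs es" and C: "closed_trail p ws ds"
    and disj: "set es \<inter> set ds = {}" and sub: "set es \<union> set ds \<subseteq> E"
    and fg: "g \<in> set es" "f \<in> set ds" "card (inc f \<inter> inc g) = 2" "p f \<inter> set vs = {}"
  shows "\<exists>q us cs. pair_selection E inc q \<and> even_degrees E q \<and> closed_trail q us cs \<and>
    set cs = set es \<union> set ds"
proof -
  have "f \<in> E" "g \<in> E" "f \<noteq> g" using fg sub disj by auto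
  have "p g \<subseteq> set vs" using T fg(1) gwalk_edge_subset[of p vs es g] by (simp add: closed_trail_def)
  have pfg: "card (inc f) = 3" "card (inc g) = 3" "p f \<subseteq> inc f" "card (p f) = 2"
    "p g \<subseteq> inc g" "card (p g) = 2"
    using E(2) p(1) \<open>f \<in> E\<close> \<open>g \<in> E\<close> by (auto simp: uniform3_def pair_selection_def)
  from crossing_pairs[OF this(1,2) fg(3) this(3-6) \<open>p g \<subseteq> set vs\<close> fg(4)]
  obtain x y a b where xyab: "p g = {x, b}" "p f = {y, a}" "x \<in> inc f" "y \<in> inc g"
    "distinct [x, y, a, b]" .
  define q where "q = p(f := {x, a}, g := {y, b})"
  have q: "\<And>e. e \<notin> {f, g} \<Longrightarrow> q e = p e" "q f = {x, a}" "q g = {y, b}"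
    using \<open>f \<noteq> g\<close> by (auto simp: q_def)
  have "pair_selection E inc q"
    unfolding pair_selection_def
  proof
    fix e assume "e \<in> E"
    consider "e = f" | "e = g" | "e \<notin> {f, g}" by blast
    then show "q e \<subseteq> inc e \<and> card (q e) = 2"
      by cases (use xyab q pfg p(1) \<open>e \<in> E\<close> in \<open>auto simp: pair_selection_def\<close>)
  qed
  moreover have "hdegree E q v = hdegree E p v" for v
    by (rule hdegree_exchange[OF E(1) \<open>f \<in> E\<close> \<open>g \<in> E\<close> \<open>f \<noteq> g\<close>]) (use q xyab in auto)
  with p(2) have "even_degrees E q" by (simp add: even_degrees_def)
  moreover obtain rv re where T': "closed_trail p (x # b # rv) (g # re)" "set (g # re) = set es"
    using closed_trail_through_edge[OF T fg(1) xyab(1)] by blast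
  moreover obtain rw rd where C': "closed_trail p (y # a # rw) (f # rd)" "set (f # rd) = set ds"
    using closed_trail_through_edge[OF C fg(2) xyab(2)] by blast
  moreover have "closed_trail q (x # a # rw @ b # rv) (f # rd @ g # re)"
    using closed_trail_join[OF T'(1) C'(1) _ q] xyab(5) disj T'(2) C'(2) by auto
  moreover have "set (f # rd @ g # re) = set es \<union> set ds" using T'(2) C'(2) by auto
  ultimately show ?thesis by blast
qed

lemma closed_trail_extend:
  assumes E: "finite E" "uniform3 E inc" "L2_connected E inc"
    and p: "pair_selection E inc p" "even_degrees E p"
    and T: "closed_trail p vs es" "set es \<subseteq> E" "set es \<noteq> E"
  shows "\<exists>q us cs. pair_selection E inc q \<and> even_degrees E q \<and> closed_trail q us cs \<and>
    set cs \<subseteq> E \<and> set es \<subset> set cs"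
proof -
  have "set es \<noteq> {}" using T(1) by (simp add: closed_trail_def)
  with L2_connected_boundary[OF E(3) T(2) _ T(3)]
  obtain g f where gf: "g \<in> set es" "f \<in> E - set es" "card (inc f \<inter> inc g) = 2" by blast
  have "even_degrees (E - set es) p"
    using even_degrees_Diff_closed_trail[OF E(1) p(2) T(1,2)] .
  moreover have "\<forall>e\<in>E - set es. card (p e) = 2" using p(1) by (simp add: pair_selection_def)
  ultimately obtain ws ds where C: "closed_trail p ws ds" "set ds \<subseteq> E - set es" "f \<in> set ds"
    using even_degrees_closed_trail[of "E - set es" p f] E(1) gf(2) by blast
  have "\<exists>q us cs. pair_selection E inc q \<and> even_degrees E q \<and> closed_trail q us cs \<and>
    set cs = set es \<union> set ds"
  proof (cases "p f \<inter> set vs = {}")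
    case True
    with closed_trail_switch[OF E(1,2) p T(1) C(1) _ _ gf(1) C(3) gf(3)] C(2) T(2)
    show ?thesis by blast
  next
    case False
    then obtain w where "w \<in> set vs" "w \<in> set ws"
      using gwalk_edge_subset[of p ws ds f] C by (auto simp: closed_trail_def)
    with closed_trail_splice[OF T(1) C(1)] C(2) p show ?thesis by blast
  qed
  with T(2) C(2,3) show ?thesis by blast
qed

lemma exists_covering_closed_trail:
  assumes E: "finite E" "E \<noteq> {}" "uniform3 E inc" "L2_connected E inc"
    and p: "pair_selection E inc p" "even_degrees E p"
  shows "\<exists>q vs es. pair_selection E inc q \<and> closed_trail q vs es \<and> set es = E"
proof -
  define covers where "covers n \<longleftrightarrow> (\<exists>q vs es. pair_selection E inc q \<and> even_degrees E q \<and>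
    closed_trail q vs es \<and> set es \<subseteq> E \<and> card (set es) = n)" for n
  obtain e0 where "e0 \<in> E" using E(2) by blast
  moreover have "\<forall>e\<in>E. card (p e) = 2" using p(1) by (simp add: pair_selection_def)
  ultimately obtain vs es where "closed_trail p vs es" "set es \<subseteq> E"
    using even_degrees_closed_trail[OF E(1) p(2)] by blast
  with p have start: "covers (card (set es))" unfolding covers_def by blast
  have bound: "\<forall>n. covers n \<longrightarrow> n \<le> card E"
    unfolding covers_def using E(1) card_mono by blast
  obtain n where n: "covers n" "\<forall>m. covers m \<longrightarrow> m \<le> n"
    using Nat.ex_has_greatest_nat[OF start bound] by blast
  then obtain q vs es where q: "pair_selection E inc q" "even_degrees E q" "closed_trail q vs es"
    "set es \<subseteq> E" "card (set es) = n" unfolding covers_def by blast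
  have "set es = E"
  proof (rule ccontr)
    assume "set es \<noteq> E"
    with closed_trail_extend[OF E(1,3,4) q(1-4)] obtain q' us cs where
      "pair_selection E inc q'" "even_degrees E q'" "closed_trail q' us cs" "set cs \<subseteq> E" "set es \<subset> set cs"
      by blast
    moreover from this have "card (set es) < card (set cs)" by (simp add: psubset_card_mono)
    ultimately show False using n(2) q(5) unfolding covers_def by fastforce
  qed
  with q show ?thesis by blast
qed

section \<open>Euler tours\<close>

lemma other_edge_if_no_pendant:
  assumes "hypergraph V E inc" "\<forall>v\<in>V. hdegree E inc v \<noteq> 1" "e \<in> E" "v \<in> inc e"
  shows "\<exists>e'\<in>E. e' \<noteq> e \<and> v \<in> inc e'"
proof (rule ccontr)
  assume "\<not> ?thesis"
  with assms(3,4) have "{e' \<in> E. v \<in> inc e'} = {e}" by auto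
  moreover have "v \<in> V" using assms(1,3,4) by (auto simp: hypergraph_def)
  ultimately show False using assms(2) by (auto simp: hdegree_def)
qed

lemma is_euler_tour_if_closed_trail:
  assumes "\<forall>e\<in>E. inc e \<subseteq> V" "pair_selection E inc p" "closed_trail p vs es" "set es = E"
  shows "is_euler_tour V E inc vs es"
proof -
  have gw: "gwalk p vs es" "es \<noteq> []" using assms(3) by (auto simp: closed_trail_def)
  have p: "p e \<subseteq> inc e" if "e \<in> E" for e using assms(2) that by (simp add: pair_selection_def)
  have "set vs \<subseteq> V" using gwalk_vertices_subset[OF gw] assms(1,4) p by blast
  moreover have "vs ! i \<noteq> vs ! Suc i \<and> vs ! i \<in> inc (es ! i) \<and> vs ! Suc i \<in> inc (es ! i)"
    if "i < length es" for i
    using gwalk_nth[OF gw(1) that] p[of "es ! i"] assms(4) that by auto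
  ultimately have "is_walk V E inc vs es"
    using gwalk_length[OF gw(1)] assms(4) by (simp add: is_walk_def)
  then show ?thesis
    using assms(3,4) closed_trail_length_ge_2[OF assms(3)]
    by (simp add: is_euler_tour_def is_closed_walk_def is_strict_trail_def closed_trail_def)
qed

theorem corollary2p37:
  fixes V :: "'v set" and E :: "'e set" and inc :: "'e \<Rightarrow> 'v set"
  assumes "hypergraph V E inc"
    and "uniform3 E inc"
    and "E \<noteq> {}"
    and "\<forall>v\<in>V. hdegree E inc v \<noteq> 1"
    and "L2_connected E inc"
  shows "eulerian V E inc"
proof -
  have E: "finite E" "\<forall>e\<in>E. inc e \<subseteq> V" using assms(1) by (auto simp: hypergraph_def)
  note no_pendant = other_edge_if_no_pendant[OF assms(1,4)]
  obtain e where "e \<in> E" using assms(3) by blast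
  then obtain Z where "parity_state E inc {e} Z"
    using parity_state_singleton[OF assms(2)] no_pendant by blast
  with parity_state_grow[OF E(1) assms(2,5) no_pendant] \<open>e \<in> E\<close>
  have "realizable_avoiding E inc {}" by blast
  then obtain p where "pair_selection E inc p" "even_degrees E p"
    using exists_even_pair_selection[OF E(1) assms(2)] by blast
  then obtain q vs es where "pair_selection E inc q" "closed_trail q vs es" "set es = E"
    using exists_covering_closed_trail[OF E(1) assms(3,2,5)] by blast
  then have "is_euler_tour V E inc vs es" by (rule is_euler_tour_if_closed_trail[OF E(2)])
  then show ?thesis by (auto simp: eulerian_def)
qed

end
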